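(* Let $\mathbf k$ be a field, $V$ a finite-dimensional $\mathbf k$-vector space with a nondegenerate quadratic form $Q$, and let $N\in\tilde{\mathcal M}_Q$, $N\ne0$. Let $e\ge2$ be the smallest integer with $N^e=0$, and let $E$ be a complement to $\ker N^{e-1}$ in $V$. Then the linear map $E^{\oplus e}\to V$, $(v_0,v_1,\dots,v_{e-1})\mapsto v_0+Nv_1+\cdots+N^{e-1}v_{e-1}$, is injective, and the restriction of $\langle,\rangle$ to its image $W=E+NE+\cdots+N^{e-1}E$ has zero radical.
   Context: $\langle x,y\rangle=Q(x+y)-Q(x)-Q(y)$, with radical $R=\{x:\langle x,V\rangle=0\}$; $Q$ is nondegenerate if $Q|_R$ is injective. $\tilde{\mathcal M}_Q$ is the set of nilpotent $N\in\mathrm{End}(V)$ with $Q(Nx)=-\langle x,Nx\rangle$ for all $x\in V$. *)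

theory Defs
  imports Complex_Main
begin

definition polar :: "('v::ab_group_add \<Rightarrow> 'k::field) \<Rightarrow> 'v \<Rightarrow> 'v \<Rightarrow> 'k" where
  "polar Q x y = Q (x + y) - Q x - Q y"

definition quadratic_form :: "('k::field \<Rightarrow> 'v::ab_group_add \<Rightarrow> 'v) \<Rightarrow> ('v \<Rightarrow> 'k) \<Rightarrow> bool" where
  "quadratic_form scale Q \<longleftrightarrow>
     (\<forall>a x. Q (scale a x) = a^2 * Q x) \<and>
     (\<forall>y. Vector_Spaces.linear scale (*) (\<lambda>x. polar Q x y))"

definition radical :: "('v::ab_group_add \<Rightarrow> 'k::field) \<Rightarrow> 'v set" where
  "radical Q = {x. \<forall>y. polar Q x y = 0}"

definition nondegenerate :: "('v::ab_group_add \<Rightarrow> 'k::field) \<Rightarrow> bool" where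
  "nondegenerate Q \<longleftrightarrow> inj_on Q (radical Q)"

definition MQ :: "('k::field \<Rightarrow> 'v::ab_group_add \<Rightarrow> 'v) \<Rightarrow> ('v \<Rightarrow> 'k) \<Rightarrow> ('v \<Rightarrow> 'v) set" where
  "MQ scale Q = {N. Vector_Spaces.linear scale scale N \<and> (\<exists>n. N ^^ n = (\<lambda>_. 0)) \<and>
                    (\<forall>x. Q (N x) = - polar Q x (N x))}"

end

theory Submission
  imports Defs
begin

text \<open>The condition \<open>Q (N x) = - polar Q x (N x)\<close> says exactly that \<open>1 + N\<close> preserves \<open>Q\<close>, hence
  the polar form. Expanding \<open>\<langle>(1 + N) x, (1 + N) y\<rangle> = \<langle>x, y\<rangle>\<close> and inducting gives
  \<open>\<langle>N\<^sup>a x, N\<^sup>b y\<rangle> = 0\<close> for \<open>a + b \<ge> e\<close> and \<open>\<langle>N\<^sup>a x, N\<^sup>b y\<rangle> = (-1)\<^sup>a \<langle>x, N\<^bsup>a+b\<^esup> y\<rangle>\<close> for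
  \<open>a + b = e - 1\<close>. If \<open>w = \<Sum> N\<^sup>i v\<^sub>i\<close> is orthogonal to \<open>W\<close> and \<open>v\<^sub>i = 0\<close> for \<open>i < k\<close>, pairing \<open>w\<close>
  with \<open>N\<^bsup>e-1-k\<^esup> y\<close> for \<open>y \<in> E\<close> leaves only \<open>\<plusminus>\<langle>v\<^sub>k, N\<^bsup>e-1\<^esup> y\<rangle>\<close>. Then \<open>N\<^bsup>e-1\<^esup> v\<^sub>k\<close> is
  orthogonal to \<open>E\<close> and to \<open>ker N\<^bsup>e-1\<^esup>\<close>, so it lies in the radical; being in the image of \<open>N\<close>
  it is isotropic, so nondegeneracy forces \<open>N\<^bsup>e-1\<^esup> v\<^sub>k = 0\<close> and thus \<open>v\<^sub>k = 0\<close>.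
  Injectivity is the case \<open>w = 0\<close>.\<close>

lemma polar_commute: "polar Q x y = polar Q y x"
  unfolding polar_def by (simp add: add.commute)

lemma additive_if_linear: "Vector_Spaces.linear s1 s2 f \<Longrightarrow> additive f"
  by (simp add: additive_def Vector_Spaces.linear_iff)

lemma additive_funpow:
  fixes f :: "'a::ab_group_add \<Rightarrow> 'a"
  shows "additive f \<Longrightarrow> additive (f ^^ n)"
  by (induction n) (simp_all add: additive_def)

lemma two_le_Least_nilpotent:
  fixes N :: "'v::zero \<Rightarrow> 'v"
  assumes "N \<noteq> (\<lambda>_. 0)" and "\<exists>n. N ^^ n = (\<lambda>_. 0)"
  shows "2 \<le> (LEAST n. N ^^ n = (\<lambda>_. 0))"
proof -
  let ?e = "LEAST n. N ^^ n = (\<lambda>_. 0)"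
  have "N ^^ ?e = (\<lambda>_. 0)"
    using assms(2) by (rule LeastI_ex)
  moreover have "N ^^ 0 \<noteq> (\<lambda>_. 0)"
    using assms(1) by (metis funpow_0)
  moreover have "N ^^ 1 \<noteq> (\<lambda>_. 0)"
    using assms(1) by simp
  ultimately have "?e \<noteq> 0" "?e \<noteq> 1"
    by metis+
  then show ?thesis
    by linarith
qed

locale MQ_nilpotent =
  fixes Q :: "'v::ab_group_add \<Rightarrow> 'k::field" and N :: "'v \<Rightarrow> 'v" and e :: nat
  assumes additive_polar: "additive (\<lambda>x. polar Q x y)"
    and additive_N: "additive N"
    and Q_N: "Q (N x) = - polar Q x (N x)"
    and N_pow_e: "N ^^ e = (\<lambda>_. 0)"
begin

lemma polar_add_left: "polar Q (x + y) z = polar Q x z + polar Q y z"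
  by (rule additive.add[OF additive_polar])

lemma polar_add_right: "polar Q z (x + y) = polar Q z x + polar Q z y"
  by (simp add: polar_commute[of Q z] polar_add_left)

lemma polar_zero_left [simp]: "polar Q 0 y = 0"
  by (rule additive.zero[OF additive_polar])

lemma polar_zero_right [simp]: "polar Q y 0 = 0"
  by (simp add: polar_commute[of Q y])

lemma polar_sum_left: "polar Q (\<Sum>i\<in>S. f i) y = (\<Sum>i\<in>S. polar Q (f i) y)"
  by (rule additive.sum[OF additive_polar])

lemma Q_zero [simp]: "Q 0 = 0"
  using polar_zero_left[of 0] by (simp add: polar_def)

lemma Q_add_N: "Q (x + N x) = Q x"
  using Q_N[of x] by (simp add: polar_def algebra_simps)

lemma polar_add_N: "polar Q (x + N x) (y + N y) = polar Q x y"
  using Q_add_N[of "x + y"] Q_add_N[of x] Q_add_N[of y] additive.add[OF additive_N, of x y]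
  by (simp add: polar_def algebra_simps)

lemma polar_N_expand: "polar Q (N x) y + polar Q x (N y) + polar Q (N x) (N y) = 0"
  using polar_add_N[of x y] by (simp add: polar_add_left polar_add_right algebra_simps)

lemma N_pow_zero [simp]: "(N ^^ n) 0 = 0"
  by (rule additive.zero[OF additive_funpow[OF additive_N]])

lemma N_pow_diff: "(N ^^ n) (x - y) = (N ^^ n) x - (N ^^ n) y"
  by (rule additive.diff[OF additive_funpow[OF additive_N]])

lemma N_pow_ge: "e \<le> m \<Longrightarrow> (N ^^ m) x = 0"
  using funpow_add[where f = N and m = "m - e" and n = e] N_pow_e by (simp del: funpow.simps)

lemma polar_N_pow_vanish: "e \<le> a + b \<Longrightarrow> polar Q ((N ^^ a) x) ((N ^^ b) y) = 0"
proof (induction "e - b" arbitrary: a b)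
  case 0
  then show ?case
    by (simp add: N_pow_ge)
next
  case (Suc d)
  then obtain a' where a: "a = Suc a'"
    by (cases a) auto
  have "polar Q ((N ^^ a') x) ((N ^^ Suc b) y) = 0"
    and "polar Q ((N ^^ Suc a') x) ((N ^^ Suc b) y) = 0"
    by (rule Suc.hyps(1); use Suc.hyps(2) Suc.prems a in arith)+
  then show ?case
    using polar_N_expand[of "(N ^^ a') x" "(N ^^ b) y"] a by simp
qed

lemma polar_N_pow_shift:
  "a + b + 1 = e \<Longrightarrow> polar Q ((N ^^ a) x) ((N ^^ b) y) = (-1) ^ a * polar Q x ((N ^^ (a + b)) y)"
proof (induction a arbitrary: b)
  case 0
  then show ?case by simp
next
  case (Suc a)
  have "polar Q ((N ^^ a) x) ((N ^^ Suc b) y) = (-1) ^ a * polar Q x ((N ^^ (Suc a + b)) y)"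
    using Suc.IH[of "Suc b"] Suc.prems by (simp del: funpow.simps)
  moreover have "polar Q ((N ^^ Suc a) x) ((N ^^ Suc b) y) = 0"
    using Suc.prems by (intro polar_N_pow_vanish) simp
  ultimately show ?case
    using polar_N_expand[of "(N ^^ a) x" "(N ^^ b) y"]
    by (simp add: eq_neg_iff_add_eq_0)
qed

lemma radical_image_N_eq_zero:
  assumes "nondegenerate Q" and "N x \<in> radical Q"
  shows "N x = 0"
proof -
  have "Q (N x) = Q 0"
    using Q_N[of x] assms(2) by (simp add: radical_def polar_commute[of Q x])
  moreover have "0 \<in> radical Q"
    by (simp add: radical_def)
  ultimately show ?thesis
    using assms unfolding nondegenerate_def inj_on_def by blast
qed

lemma polar_sum_N_pow_leading:
  assumes k: "k < e" and v: "\<forall>i<k. v i = 0"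
  shows "polar Q (\<Sum>i<e. (N ^^ i) (v i)) ((N ^^ (e - 1 - k)) y)
    = (-1) ^ k * polar Q (v k) ((N ^^ (e - 1)) y)"
proof -
  let ?t = "\<lambda>i. polar Q ((N ^^ i) (v i)) ((N ^^ (e - 1 - k)) y)"
  have "?t i = 0" if "i \<in> {..<e} - {k}" for i
  proof (cases "i < k")
    case True
    then show ?thesis using v by simp
  next
    case False
    then show ?thesis using that by (intro polar_N_pow_vanish) auto
  qed
  then have "(\<Sum>i<e. ?t i) = ?t k"
    using sum.remove[of "{..<e}" k ?t] k by simp
  also have "\<dots> = (-1) ^ k * polar Q (v k) ((N ^^ (e - 1)) y)"
    using polar_N_pow_shift[of k "e - 1 - k"] k by simp
  finally show ?thesis
    by (simp add: polar_sum_left)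
qed

end

locale MQ_top_kernel_complement = MQ_nilpotent +
  fixes E
  assumes nondeg: "nondegenerate Q"
    and two_le_e: "2 \<le> e"
    and zero_in_E: "0 \<in> E"
    and diff_in_E: "x \<in> E \<Longrightarrow> y \<in> E \<Longrightarrow> x - y \<in> E"
    and E_inter_kernel: "E \<inter> {x. (N ^^ (e - 1)) x = 0} = {0}"
    and E_plus_kernel: "\<forall>x. \<exists>u\<in>E. \<exists>k. (N ^^ (e - 1)) k = 0 \<and> x = u + k"
begin

definition W where
  "W = {\<Sum>i<e. (N ^^ i) (v i) | v. \<forall>i<e. v i \<in> E}"

lemma N_pow_in_W:
  assumes "y \<in> E" and "j < e"
  shows "(N ^^ j) y \<in> W"
proof -
  have "(\<Sum>i<e. (N ^^ i) (if i = j then y else 0)) = (N ^^ j) y"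
    using assms(2) by (simp add: if_distrib cong: if_cong)
  then show ?thesis
    unfolding W_def using assms zero_in_E by (intro CollectI exI[of _ "\<lambda>i. if i = j then y else 0"]) auto
qed

lemma eq_zero_if_orthogonal_top_power:
  assumes x: "x \<in> E" and orth: "\<forall>y\<in>E. polar Q x ((N ^^ (e - 1)) y) = 0"
  shows "x = 0"
proof -
  let ?z = "(N ^^ (e - 1)) x"
  have shift: "polar Q ?z y = (-1) ^ (e - 1) * polar Q x ((N ^^ (e - 1)) y)" for y
    using polar_N_pow_shift[of "e - 1" 0 x y] two_le_e by simp
  have "polar Q ?z y = 0" for y
  proof -
    obtain u k where u: "u \<in> E" and k: "(N ^^ (e - 1)) k = 0" and "y = u + k"
      using E_plus_kernel by blast
    then have "polar Q ?z y = polar Q ?z u + polar Q ?z k"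
      by (simp add: polar_add_right)
    also have "\<dots> = 0"
      using shift[of u] shift[of k] orth u k by simp
    finally show ?thesis .
  qed
  moreover have "e - 1 = Suc (e - 2)"
    using two_le_e by arith
  then have "?z = N ((N ^^ (e - 2)) x)"
    by (simp only: funpow.simps comp_apply)
  ultimately have "(N ^^ (e - 1)) x = 0"
    using radical_image_N_eq_zero[OF nondeg] by (simp add: radical_def)
  then show ?thesis
    using E_inter_kernel x by blast
qed

lemma block_sum_orthogonal_W_imp_zero:
  assumes v: "\<forall>i<e. v i \<in> E" and orth: "\<forall>w\<in>W. polar Q (\<Sum>i<e. (N ^^ i) (v i)) w = 0"
    and k: "k < e"
  shows "v k = 0"
  using k
proof (induction k rule: less_induct)
  case (less k)
  have "polar Q (v k) ((N ^^ (e - 1)) y) = 0" if "y \<in> E" for y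
    using polar_sum_N_pow_leading[of k v y] orth N_pow_in_W[OF that, of "e - 1 - k"] less by simp
  then show "v k = 0"
    using eq_zero_if_orthogonal_top_power v less.prems by blast
qed

lemma inj_on_block_sum:
  "inj_on (\<lambda>v. \<Sum>i<e. (N ^^ i) (v i)) {v. (\<forall>i<e. v i \<in> E) \<and> (\<forall>i\<ge>e. v i = 0)}"
proof (rule inj_onI, rule ext)
  fix v v' i
  assume v: "v \<in> {v. (\<forall>i<e. v i \<in> E) \<and> (\<forall>i\<ge>e. v i = 0)}"
    and v': "v' \<in> {v. (\<forall>i<e. v i \<in> E) \<and> (\<forall>i\<ge>e. v i = 0)}"
    and eq: "(\<Sum>i<e. (N ^^ i) (v i)) = (\<Sum>i<e. (N ^^ i) (v' i))"
  have "(\<Sum>i<e. (N ^^ i) (v i - v' i)) = 0"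
    using eq by (simp add: N_pow_diff sum_subtractf)
  then have "i < e \<Longrightarrow> v i - v' i = 0"
    using v v' diff_in_E by (intro block_sum_orthogonal_W_imp_zero[where v = "\<lambda>i. v i - v' i"]) auto
  then show "v i = v' i"
    using v v' by (cases "i < e") auto
qed

lemma radical_W: "{w \<in> W. \<forall>w'\<in>W. polar Q w w' = 0} = {0}"
proof (intro equalityI subsetI)
  fix w
  assume "w \<in> {w \<in> W. \<forall>w'\<in>W. polar Q w w' = 0}"
  then obtain v where "\<forall>i<e. v i \<in> E" "w = (\<Sum>i<e. (N ^^ i) (v i))" "\<forall>w'\<in>W. polar Q w w' = 0"
    unfolding W_def by blast
  then show "w \<in> {0}"
    using block_sum_orthogonal_W_imp_zero[of v] by simp
next
  show "w \<in> {w \<in> W. \<forall>w'\<in>W. polar Q w w' = 0}" if "w \<in> {0}" for w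
    using that N_pow_in_W[OF zero_in_E, of 0] two_le_e by simp
qed

end

theorem mainTheorem9:
  fixes scale :: "'k::field \<Rightarrow> 'v::ab_group_add \<Rightarrow> 'v"
    and B :: "'v set" and Q :: "'v \<Rightarrow> 'k" and N :: "'v \<Rightarrow> 'v"
    and e :: nat and E :: "'v set"
  assumes fd: "finite_dimensional_vector_space scale B"
    and qf: "quadratic_form scale Q"
    and nd: "nondegenerate Q"
    and NM: "N \<in> MQ scale Q"
    and N0: "N \<noteq> (\<lambda>_. 0)"
    and e_def: "e = (LEAST n. N ^^ n = (\<lambda>_. 0))"
    and E_sub: "module.subspace scale E"
    and E_int: "E \<inter> {x. (N ^^ (e - 1)) x = 0} = {0}"
    and E_sum: "\<forall>x. \<exists>u\<in>E. \<exists>k. (N ^^ (e - 1)) k = 0 \<and> x = u + k"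
  shows "2 \<le> e \<and>
         inj_on (\<lambda>v. \<Sum>i<e. (N ^^ i) (v i)) {v. (\<forall>i<e. v i \<in> E) \<and> (\<forall>i\<ge>e. v i = 0)} \<and>
         (let W = {\<Sum>i<e. (N ^^ i) (v i) | v. \<forall>i<e. v i \<in> E}
          in {w \<in> W. \<forall>w'\<in>W. polar Q w w' = 0} = {0})"
proof -
  interpret vector_space scale
    using fd by (rule finite_dimensional_vector_space.axioms(1))
  have lin: "Vector_Spaces.linear scale scale N" and nil: "\<exists>n. N ^^ n = (\<lambda>_. 0)"
    and Q_N: "\<And>x. Q (N x) = - polar Q x (N x)"
    using NM unfolding MQ_def by auto
  have e2: "2 \<le> e"
    unfolding e_def using N0 nil by (rule two_le_Least_nilpotent)
  interpret MQ_top_kernel_complement Q N e E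
  proof (intro MQ_top_kernel_complement.intro MQ_nilpotent.intro MQ_top_kernel_complement_axioms.intro)
    show "additive (\<lambda>x. polar Q x y)" for y
      using qf unfolding quadratic_form_def by (blast intro: additive_if_linear)
    show "N ^^ e = (\<lambda>_. 0)"
      unfolding e_def using nil by (rule LeastI_ex)
  qed (use lin Q_N nd e2 E_sub E_int E_sum in \<open>auto intro: additive_if_linear subspace_0 subspace_diff\<close>)
  show ?thesis
    using e2 inj_on_block_sum radical_W by (simp add: W_def Let_def)
qed

end
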